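(* Let $\mathbb{F}$ be the countable fan and $\mathsf{2}$ the discrete space $\{\mathtt{0},\mathtt{1}\}$. Let $(h_n)_n$ converge to $h_\infty$ in $\mathsf{2}^{\mathbb{N}\times\mathbb{F}}$. Then for every $k\in\mathbb{N}$ there exists $m\in\mathbb{N}$ such that $h_n(k,a,b)=h_\infty(k,\infty,\infty)$ for all $n\ge m$ (including $n=\infty$), all $a\ge m$ and all $b\in\mathbb{N}$.
   Context: The countable fan $\mathbb{F}$ has underlying set $\mathbb{N}^2\cup\{(\infty,\infty)\}$ and the metric $d((a,b),(\infty,\infty))=2^{-a}$, $d((a,b),(a',b'))=\max\{2^{-a},2^{-a'}\}$ for distinct $(a,b),(a',b')\in\mathbb{N}^2$. $\mathbb{N}$ is discrete. $\mathsf{2}^{\mathbb{N}\times\mathbb{F}}$ is the exponential in the category QCB (quotients of countably based spaces): the set of continuous maps $\mathbb{N}\times\mathbb{F}\to\mathsf{2}$ with the sequentialisation of the compact-open topology. *)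

theory Defs
  imports "HOL-Analysis.Analysis"
begin

text \<open>Points of the countable fan: Pt a b is (a,b) in N^2, Top is (infinity,infinity).\<close>
datatype fanpt = Pt nat nat | Top

fun fan_dist :: "fanpt \<Rightarrow> fanpt \<Rightarrow> real" where
  "fan_dist Top Top = 0"
| "fan_dist (Pt a b) Top = (1/2) ^ a"
| "fan_dist Top (Pt a b) = (1/2) ^ a"
| "fan_dist (Pt a b) (Pt a' b') =
     (if (a, b) = (a', b') then 0 else max ((1/2) ^ a) ((1/2) ^ a'))"

definition fan_topology :: "fanpt topology" where
  "fan_topology = Metric_space.mtopology UNIV fan_dist"

definition NxF :: "(nat \<times> fanpt) topology" where
  "NxF = prod_topology (discrete_topology UNIV) fan_topology"

definition two :: "bool topology" where
  "two = discrete_topology UNIV"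

definition compact_open :: "'a topology \<Rightarrow> 'b topology \<Rightarrow> ('a \<Rightarrow> 'b) topology" where
  "compact_open X Y =
     subtopology
       (topology_generated_by {{f. f ` K \<subseteq> U} | K U. compactin X K \<and> openin Y U})
       {f. continuous_map X Y f}"

definition seq_open :: "'a topology \<Rightarrow> 'a set \<Rightarrow> bool" where
  "seq_open T U \<longleftrightarrow> U \<subseteq> topspace T \<and>
     (\<forall>x l. limitin T x l sequentially \<and> l \<in> U \<longrightarrow> (\<forall>\<^sub>F n in sequentially. x n \<in> U))"

definition sequentialisation :: "'a topology \<Rightarrow> 'a topology" where
  "sequentialisation T = topology (seq_open T)"

definition qcb_exp :: "'a topology \<Rightarrow> 'b topology \<Rightarrow> ('a \<Rightarrow> 'b) topology" where
  "qcb_exp X Y = sequentialisation (compact_open X Y)"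

end

theory Submission
  imports Defs
begin

(*
  Every neighbourhood of Top in the fan contains all points Pt a b with a large, so the continuous
  limit hinf is constant near (k, Top). If the h n were not uniformly so, there would be points
  Pt (a m) (b m) with a m \<rightarrow> \<infinity> and indices r m \<rightarrow> \<infinity> with h (r m) (k, Pt (a m) (b m)) \<noteq> hinf (k, Top).
  These points converge to (k, Top) and, together with their limit, form a compact set K on which
  hinf is constant; compact-open convergence then forces h n ` K \<subseteq> {hinf (k, Top)} for large n.
  Sequentialising a topology does not change which sequences converge to what.
*)

fun fan_weight :: "fanpt \<Rightarrow> real" where
  "fan_weight Top = 0"
| "fan_weight (Pt a b) = (1/2) ^ a"

lemma fan_weight_nonneg: "0 \<le> fan_weight x"
  by (cases x) auto

lemma fan_weight_eq_0_iff: "fan_weight x = 0 \<longleftrightarrow> x = Top"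
  by (cases x) auto

lemma fan_dist_eq_max_weight:
  "fan_dist x y = (if x = y then 0 else max (fan_weight x) (fan_weight y))"
  by (cases x; cases y) (simp_all add: max_absorb1 max_absorb2)

lemma Metric_space_fan_dist: "Metric_space UNIV fan_dist"
proof
  fix x y z
  note nonneg = fan_weight_nonneg[of x] fan_weight_nonneg[of y] fan_weight_nonneg[of z]
  show "0 \<le> fan_dist x y"
    using nonneg by (auto simp: fan_dist_eq_max_weight)
  show "fan_dist x y = fan_dist y x"
    by (auto simp: fan_dist_eq_max_weight max.commute)
  show "fan_dist x y = 0 \<longleftrightarrow> x = y"
    using nonneg fan_weight_eq_0_iff[of x] fan_weight_eq_0_iff[of y]
    by (auto simp: fan_dist_eq_max_weight max_def)
  show "fan_dist x z \<le> fan_dist x y + fan_dist y z"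
    using nonneg by (auto simp: fan_dist_eq_max_weight max_def)
qed

interpretation Fan: Metric_space UNIV fan_dist
  by (rule Metric_space_fan_dist)

lemma topspace_fan_topology [simp]: "topspace fan_topology = UNIV"
  by (simp add: fan_topology_def)

lemma topspace_NxF [simp]: "topspace NxF = UNIV"
  by (simp add: NxF_def)

lemma eventually_half_power_less:
  "r > 0 \<Longrightarrow> \<forall>\<^sub>F a in sequentially. (1/2::real) ^ a < r"
  using order_tendstoD(2)[OF LIMSEQ_realpow_zero[of "1/2::real"]] by simp

lemma fan_topology_neighbourhood_Top:
  assumes "openin fan_topology V" "Top \<in> V"
  shows "\<exists>N. \<forall>a\<ge>N. \<forall>b. Pt a b \<in> V"
proof -
  obtain r where "r > 0" and ball: "Fan.mball Top r \<subseteq> V"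
    using assms unfolding fan_topology_def Fan.openin_mtopology by blast
  then obtain N where "\<forall>a\<ge>N. (1/2::real) ^ a < r"
    using eventually_half_power_less unfolding eventually_sequentially by blast
  then have "\<forall>a\<ge>N. \<forall>b. Pt a b \<in> Fan.mball Top r"
    by simp
  with ball show ?thesis
    by blast
qed

lemma limitin_fan_topology_Top:
  assumes "filterlim a at_top sequentially"
  shows "limitin fan_topology (\<lambda>m. Pt (a m) (b m)) Top sequentially"
proof -
  have "(\<lambda>m. (1/2::real) ^ a m) \<longlonglongrightarrow> 0"
    using filterlim_compose[OF LIMSEQ_realpow_zero assms] by simp
  then show ?thesis
    unfolding fan_topology_def Fan.limitin_metric_dist_null by simp
qed

lemma continuous_map_discrete_locally_constant_at_Top:
  assumes "continuous_map NxF (discrete_topology UNIV) f"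
  shows "\<exists>N. \<forall>a\<ge>N. \<forall>b. f (k, Pt a b) = f (k, Top)"
proof -
  have "continuous_map fan_topology NxF (\<lambda>y. (k, y))"
    unfolding NxF_def by (intro continuous_map_pairedI) simp_all
  then have "continuous_map fan_topology (discrete_topology UNIV) (f \<circ> Pair k)"
    using assms by (rule continuous_map_compose)
  then have "openin fan_topology {y \<in> topspace fan_topology. (f \<circ> Pair k) y \<in> {f (k, Top)}}"
    by (rule openin_continuous_map_preimage) simp
  then show ?thesis
    using fan_topology_neighbourhood_Top[of "{y. f (k, y) = f (k, Top)}"] by simp
qed

lemma istopology_seq_open: "istopology (seq_open T)"
proof -
  have "seq_open T (S \<inter> U)" if "seq_open T S" "seq_open T U" for S U
    using that unfolding seq_open_def by (auto simp: eventually_conj_iff)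
  moreover have "seq_open T (\<Union>\<K>)" if "\<forall>U\<in>\<K>. seq_open T U" for \<K>
    unfolding seq_open_def
  proof (intro conjI allI impI)
    show "\<Union>\<K> \<subseteq> topspace T"
      using that by (auto simp: seq_open_def)
    fix x l
    assume "limitin T x l sequentially \<and> l \<in> \<Union>\<K>"
    then obtain U where "U \<in> \<K>" "l \<in> U" "limitin T x l sequentially"
      by blast
    with that have "\<forall>\<^sub>F n in sequentially. x n \<in> U"
      by (auto simp: seq_open_def)
    then show "\<forall>\<^sub>F n in sequentially. x n \<in> \<Union>\<K>"
      by (rule eventually_mono) (use \<open>U \<in> \<K>\<close> in blast)
  qed
  ultimately show ?thesis
    unfolding istopology_def by blast
qed

lemma openin_sequentialisation: "openin (sequentialisation T) U \<longleftrightarrow> seq_open T U"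
  by (simp add: sequentialisation_def istopology_seq_open)

lemma openin_imp_openin_sequentialisation:
  "openin T U \<Longrightarrow> openin (sequentialisation T) U"
  by (auto simp: openin_sequentialisation seq_open_def limitin_def openin_subset)

lemma topspace_sequentialisation: "topspace (sequentialisation T) = topspace T"
proof
  show "topspace (sequentialisation T) \<subseteq> topspace T"
    by (auto simp: topspace_def openin_sequentialisation seq_open_def)
  show "topspace T \<subseteq> topspace (sequentialisation T)"
    using openin_imp_openin_sequentialisation[of T "topspace T"] openin_subset by auto
qed

lemma limitin_sequentialisation_imp_limitin:
  "limitin (sequentialisation T) x l F \<Longrightarrow> limitin T x l F"
  by (auto simp: limitin_def topspace_sequentialisation openin_imp_openin_sequentialisation)

lemma topspace_compact_open_imp_continuous_map:
  "f \<in> topspace (compact_open X Y) \<Longrightarrow> continuous_map X Y f"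
  by (simp add: compact_open_def)

lemma limitin_compact_open_eventually_image_subset:
  assumes "limitin (compact_open X Y) h f F" "compactin X K" "openin Y U" "f ` K \<subseteq> U"
  shows "\<forall>\<^sub>F n in F. h n ` K \<subseteq> U"
proof -
  let ?B = "{{f. f ` K \<subseteq> U} | K U. compactin X K \<and> openin Y U}"
  have lim: "limitin (topology_generated_by ?B) h f F"
    using assms(1) unfolding compact_open_def limitin_subtopology by (rule conjunct2[OF conjunct2])
  have "{g. g ` K \<subseteq> U} \<in> ?B"
    using assms(2,3) by blast
  then have "openin (topology_generated_by ?B) {g. g ` K \<subseteq> U}"
    unfolding openin_topology_generated_by_iff by (rule generate_topology_on.Basis)
  then show ?thesis
    using lim assms(4) unfolding limitin_def by auto
qed

lemma limitin_compact_open_along_convergent_sequence: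
  assumes "limitin (compact_open X Y) h f sequentially"
    and "limitin X p l sequentially" "range p \<subseteq> topspace X"
    and "openin Y U" "f l \<in> U" "\<And>m. f (p m) \<in> U"
    and "filterlim r at_top sequentially"
  shows "\<forall>\<^sub>F m in sequentially. h (r m) (p m) \<in> U"
proof -
  let ?K = "insert l (range p)"
  have "compactin X ?K"
    by (rule compactin_sequence_with_limit[OF assms(2) order.refl assms(3)])
  moreover have "f ` ?K \<subseteq> U"
    using assms(5,6) by auto
  ultimately have "\<forall>\<^sub>F n in sequentially. h n ` ?K \<subseteq> U"
    using limitin_compact_open_eventually_image_subset[OF assms(1) _ assms(4)] by blast
  then have "\<forall>\<^sub>F m in sequentially. h (r m) ` ?K \<subseteq> U"
    using assms(7) by (rule eventually_compose_filterlim)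
  then show ?thesis
    by (rule eventually_mono) auto
qed

lemma at_top_if_ge_self: "(\<And>m. f m \<ge> m) \<Longrightarrow> filterlim (f :: nat \<Rightarrow> nat) at_top sequentially"
  by (rule filterlim_at_top_mono[OF filterlim_ident]) simp

lemma compact_open_limit_eventually_constant_near_Top:
  fixes h :: "nat \<Rightarrow> nat \<times> fanpt \<Rightarrow> 'b"
  assumes lim: "limitin (compact_open NxF (discrete_topology UNIV)) h f sequentially"
    and N: "\<And>a b. a \<ge> N \<Longrightarrow> f (k, Pt a b) = f (k, Top)"
  shows "\<exists>m. \<forall>n\<ge>m. \<forall>a\<ge>m. \<forall>b. h n (k, Pt a b) = f (k, Top)"
proof (rule ccontr)
  assume "\<not> ?thesis"
  then have "\<forall>m. \<exists>n a b. max m N \<le> n \<and> max m N \<le> a \<and> h n (k, Pt a b) \<noteq> f (k, Top)"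
    by blast
  then obtain r a b where r: "\<And>m. max m N \<le> r m" and a: "\<And>m. max m N \<le> a m"
    and bad: "\<And>m. h (r m) (k, Pt (a m) (b m)) \<noteq> f (k, Top)"
    by metis
  have conv: "limitin NxF (\<lambda>m. (k, Pt (a m) (b m))) (k, Top) sequentially"
    using limitin_fan_topology_Top[OF at_top_if_ge_self] a
    unfolding NxF_def limitin_pairwise by (simp add: o_def)
  have "\<forall>\<^sub>F m in sequentially. h (r m) (k, Pt (a m) (b m)) \<in> {f (k, Top)}"
    by (rule limitin_compact_open_along_convergent_sequence[OF lim conv _ _ _ _ at_top_if_ge_self])
      (use N a r in auto)
  then obtain M where "h (r M) (k, Pt (a M) (b M)) \<in> {f (k, Top)}"
    by (auto simp: eventually_sequentially)
  with bad show False
    by blast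
qed

theorem lemma3p5:
  fixes h :: "nat \<Rightarrow> (nat \<times> fanpt \<Rightarrow> bool)" and hinf :: "nat \<times> fanpt \<Rightarrow> bool"
  assumes "\<And>n. h n \<in> topspace (qcb_exp NxF two)"
    and "hinf \<in> topspace (qcb_exp NxF two)"
    and "limitin (qcb_exp NxF two) h hinf sequentially"
  shows "\<forall>k. \<exists>m. \<forall>a\<ge>m. \<forall>b.
           (\<forall>n\<ge>m. h n (k, Pt a b) = hinf (k, Top)) \<and> hinf (k, Pt a b) = hinf (k, Top)"
proof
  fix k
  have lim: "limitin (compact_open NxF two) h hinf sequentially"
    using assms(3) unfolding qcb_exp_def by (rule limitin_sequentialisation_imp_limitin)
  have "continuous_map NxF two hinf"
    using assms(2) unfolding qcb_exp_def topspace_sequentialisation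
    by (rule topspace_compact_open_imp_continuous_map)
  then obtain N where N: "\<And>a b. a \<ge> N \<Longrightarrow> hinf (k, Pt a b) = hinf (k, Top)"
    using continuous_map_discrete_locally_constant_at_Top unfolding two_def by metis
  obtain m where m: "\<And>n a b. n \<ge> m \<Longrightarrow> a \<ge> m \<Longrightarrow> h n (k, Pt a b) = hinf (k, Top)"
    using compact_open_limit_eventually_constant_near_Top[OF lim[unfolded two_def] N] by blast
  show "\<exists>m. \<forall>a\<ge>m. \<forall>b. (\<forall>n\<ge>m. h n (k, Pt a b) = hinf (k, Top)) \<and> hinf (k, Pt a b) = hinf (k, Top)"
    by (intro exI[of _ "max m N"] allI impI conjI) (simp_all add: m N)
qed

end
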